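(* Let $A\subset\mathbb{C}^n$ be a set-germ at $0$ with $0\in\overline{A}$. Then $A$ satisfies condition (CSSP) if and only if $A$ satisfies condition (SSP) and $S^1D(A)=D(A)$, where $S^1=\{e^{i\theta}:\theta\in\mathbb{R}\}$. Consequently, if $A$ satisfies condition (SSP), then both $S^1A$ and $\mathbb{C}A$ satisfy condition (CSSP).
   Context: Identify $\mathbb{C}^n$ with $\mathbb{R}^{2n}$. For a set-germ $A$ at $0$ with $0\in\overline A$, $D(A)=\{a\in S^{2n-1}:\exists\, x_i\in A\setminus\{0\},\ x_i\to0,\ x_i/\|x_i\|\to a\}$, and the complex tangent cone is $LD^*(A)=\{v\in\mathbb{C}^n:\exists\, c_i\in\mathbb{C},\ \exists\, v_i\in A\setminus\{0\},\ v_i\to0,\ c_iv_i\to v\}$. For sequences, $\|u_m\|\ll\|v_m\|,\|w_m\|$ means $\|u_m\|/\|v_m\|\to0$ and $\|u_m\|/\|w_m\|\to0$. $A$ satisfies condition (SSP) if for every sequence $a_m\to0$ with $\lim a_m/\|a_m\|\in D(A)$ there is a sequence $b_m\in A$ with $\|a_m-b_m\|\ll\|a_m\|,\|b_m\|$. $A$ satisfies condition (CSSP) if for every sequence $a_m\in\mathbb{C}^n$ tending to $0$ with $\lim a_m/\|a_m\|\in LD^*(A)$ there is a sequence $b_m\in A$ with $\|a_m-b_m\|\ll\|a_m\|,\|b_m\|$. Here $S^1D(A)=\{ca: c\in S^1, a\in D(A)\}$, $S^1A=\{ca:c\in S^1,a\in A\}$, $\mathbb{C}A=\{ca:c\in\mathbb{C},a\in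 A\}$. *)

theory Defs
  imports "HOL-Analysis.Analysis"
begin

text \<open>We identify \<open>\<complex>^n\<close> with \<open>\<real>^{2n}\<close>: the norm on \<open>complex^'n\<close> is the Euclidean one.
  A set-germ at 0 is represented by a set (all notions below only depend on the germ).\<close>

definition D :: "(complex^'n) set \<Rightarrow> (complex^'n) set" where
  "D A = {a \<in> sphere 0 1. \<exists>x::nat \<Rightarrow> complex^'n.
            (\<forall>i. x i \<in> A - {0}) \<and> x \<longlonglongrightarrow> 0 \<and>
            (\<lambda>i. (1 / norm (x i)) *\<^sub>R x i) \<longlonglongrightarrow> a}"

definition LDstar :: "(complex^'n) set \<Rightarrow> (complex^'n) set" where
  "LDstar A = {v. \<exists>(c::nat \<Rightarrow> complex) (w::nat \<Rightarrow> complex^'n).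
            (\<forall>i. w i \<in> A - {0}) \<and> w \<longlonglongrightarrow> 0 \<and>
            (\<lambda>i. c i *s w i) \<longlonglongrightarrow> v}"

definition much_less :: "(nat \<Rightarrow> 'a::real_normed_vector) \<Rightarrow> (nat \<Rightarrow> 'b::real_normed_vector)
    \<Rightarrow> (nat \<Rightarrow> 'c::real_normed_vector) \<Rightarrow> bool" where
  "much_less u v w \<longleftrightarrow> (\<lambda>m. norm (u m) / norm (v m)) \<longlonglongrightarrow> 0 \<and>
                        (\<lambda>m. norm (u m) / norm (w m)) \<longlonglongrightarrow> 0"

text \<open>The sequences \<open>a_m\<close> are taken nonzero (implicit in \<open>a_m/\<parallel>a_m\<parallel>\<close>).\<close>
definition SSP :: "(complex^'n) set \<Rightarrow> bool" where
  "SSP A \<longleftrightarrow> (\<forall>a::nat \<Rightarrow> complex^'n. (\<forall>m. a m \<noteq> 0) \<and> a \<longlonglongrightarrow> 0 \<and>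
      (\<exists>l. (\<lambda>m. (1 / norm (a m)) *\<^sub>R a m) \<longlonglongrightarrow> l \<and> l \<in> D A) \<longrightarrow>
      (\<exists>b. (\<forall>m. b m \<in> A) \<and> much_less (\<lambda>m. a m - b m) a b))"

definition CSSP :: "(complex^'n) set \<Rightarrow> bool" where
  "CSSP A \<longleftrightarrow> (\<forall>a::nat \<Rightarrow> complex^'n. (\<forall>m. a m \<noteq> 0) \<and> a \<longlonglongrightarrow> 0 \<and>
      (\<exists>l. (\<lambda>m. (1 / norm (a m)) *\<^sub>R a m) \<longlonglongrightarrow> l \<and> l \<in> LDstar A) \<longrightarrow>
      (\<exists>b. (\<forall>m. b m \<in> A) \<and> much_less (\<lambda>m. a m - b m) a b))"

definition S1_mult :: "(complex^'n) set \<Rightarrow> (complex^'n) set" where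
  "S1_mult A = {c *s a | c a. cmod c = 1 \<and> a \<in> A}"

definition C_mult :: "(complex^'n) set \<Rightarrow> (complex^'n) set" where
  "C_mult A = {c *s a | c a. a \<in> A}"

end

theory Submission
  imports Defs
begin

(* Every limiting direction is a unit vector, and normalising the complex scalars c_i in the
   definition of LD*(A) shows that the unit vectors of LD*(A) are exactly the rotations of the
   directions in D(A).  Hence (CSSP) is (SSP) asked for all directions in S^1 D(A), which gives
   the "if" part.  Conversely, applying (CSSP) to the ray v/(m+1) towards some v in S^1 D(A)
   yields points of A whose directions tend to v, so v lies in D(A).
   For S^1 A, the rotation carrying a limiting direction of S^1 A into D(A) transports the
   approximating sequence from A; for the cone C A, LD*(C A) lies in the closure of C A, and
   rescaling points of C A near the limiting direction to the norms of a_m approximates a_m. *)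

lemma inverse_norm_scaleR_eq_sgn: "(1 / norm x) *\<^sub>R x = sgn (x::'a::real_normed_vector)"
  by (simp add: sgn_div_norm divide_inverse_commute)

lemma norm_vector_smult: "norm (c *s (x::complex^'n)) = cmod c * norm x"
  unfolding norm_vec_def by (simp add: norm_mult L2_set_right_distrib)

lemma scaleR_eq_vector_smult: "r *\<^sub>R (x::complex^'n) = complex_of_real r *s x"
  by (simp add: vec_eq_iff del: scaleR_conv_of_real) (simp add: scaleR_conv_of_real)

lemma sgn_vector_smult: "sgn (c *s x) = sgn c *s sgn (x::complex^'n)"
  by (simp add: sgn_div_norm norm_vector_smult scaleR_eq_vector_smult vector_smult_assoc
      complex_sgn_def divide_inverse mult_ac scaleR_conv_of_real)

lemma tendsto_vector_smult:
  fixes f :: "nat \<Rightarrow> complex" and g :: "nat \<Rightarrow> complex^'n"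
  assumes "f \<longlonglongrightarrow> c" "g \<longlonglongrightarrow> x"
  shows "(\<lambda>i. f i *s g i) \<longlonglongrightarrow> c *s x"
  by (rule vec_tendstoI) (simp add: assms tendsto_mult tendsto_vec_nth)

lemma norm_sgn_diff_le:
  fixes a b :: "'a::real_normed_vector"
  assumes "a \<noteq> 0"
  shows "norm (sgn a - sgn b) \<le> 2 * norm (a - b) / norm a"
proof -
  have split: "sgn a - sgn b = (1 / norm a) *\<^sub>R (a - b) + (1 / norm a - 1 / norm b) *\<^sub>R b"
    by (simp add: sgn_div_norm divide_inverse_commute algebra_simps)
  have "norm ((1 / norm a - 1 / norm b) *\<^sub>R b) \<le> norm (a - b) / norm a"
  proof (cases "b = 0")
    case False
    have "norm ((1 / norm a - 1 / norm b) *\<^sub>R b) = \<bar>norm b - norm a\<bar> / norm a"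
      using assms False by (simp add: field_simps abs_div flip: abs_mult)
    also have "\<dots> \<le> norm (a - b) / norm a"
      by (intro divide_right_mono) (simp_all, metis norm_minus_commute norm_triangle_ineq3)
    finally show ?thesis .
  qed simp
  moreover have "norm ((1 / norm a) *\<^sub>R (a - b)) = norm (a - b) / norm a"
    by simp
  ultimately show ?thesis
    unfolding split
    using norm_triangle_ineq[of "(1 / norm a) *\<^sub>R (a - b)" "(1 / norm a - 1 / norm b) *\<^sub>R b"]
    by linarith
qed

lemma norm_limit_sgn:
  fixes a :: "nat \<Rightarrow> 'a::real_normed_vector"
  assumes "\<forall>m. a m \<noteq> 0" "(\<lambda>m. sgn (a m)) \<longlonglongrightarrow> l"
  shows "norm l = 1"
proof -
  have "(\<lambda>m. norm (sgn (a m))) \<longlonglongrightarrow> norm l"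
    using assms(2) by (rule tendsto_norm)
  moreover have "(\<lambda>m. norm (sgn (a m))) = (\<lambda>m. 1)"
    using assms(1) by (simp add: norm_sgn)
  ultimately show ?thesis
    using LIMSEQ_unique tendsto_const by metis
qed

lemma much_less_imp_sgn_tendsto:
  fixes a b :: "nat \<Rightarrow> 'a::real_normed_vector"
  assumes a0: "\<forall>m. a m \<noteq> 0" and a: "a \<longlonglongrightarrow> 0" and ml: "much_less (\<lambda>m. a m - b m) a b"
    and sgn_a: "(\<lambda>m. sgn (a m)) \<longlonglongrightarrow> l"
  shows "b \<longlonglongrightarrow> 0" "(\<lambda>m. sgn (b m)) \<longlonglongrightarrow> l"
proof -
  define \<rho> where "\<rho> m = norm (a m - b m) / norm (a m)" for m
  have \<rho>: "\<rho> \<longlonglongrightarrow> 0"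
    using ml unfolding much_less_def \<rho>_def by simp
  have "(\<lambda>m. \<rho> m * norm (a m)) \<longlonglongrightarrow> 0 * 0"
    by (intro tendsto_mult \<rho>) (use tendsto_norm[OF a] in simp)
  moreover have "(\<lambda>m. \<rho> m * norm (a m)) = (\<lambda>m. norm (a m - b m))"
    using a0 by (simp add: \<rho>_def)
  ultimately have "(\<lambda>m. a m - b m) \<longlonglongrightarrow> 0"
    by (simp add: tendsto_norm_zero_iff)
  from tendsto_diff[OF a this] show "b \<longlonglongrightarrow> 0"
    by simp
  have "(\<lambda>m. sgn (a m) - sgn (b m)) \<longlonglongrightarrow> 0"
  proof (rule Lim_null_comparison)
    show "\<forall>\<^sub>F m in sequentially. norm (sgn (a m) - sgn (b m)) \<le> 2 * \<rho> m"
      by (intro always_eventually allI) (simp add: \<rho>_def norm_sgn_diff_le a0)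
    show "(\<lambda>m. 2 * \<rho> m) \<longlonglongrightarrow> 0"
      using tendsto_mult_right_zero[OF \<rho>] .
  qed
  from tendsto_diff[OF sgn_a this] show "(\<lambda>m. sgn (b m)) \<longlonglongrightarrow> l"
    by simp
qed

lemma mem_D_iff:
  "v \<in> D A \<longleftrightarrow> norm v = 1 \<and>
     (\<exists>x. (\<forall>i. x i \<in> A - {0}) \<and> x \<longlonglongrightarrow> 0 \<and> (\<lambda>i. sgn (x i)) \<longlonglongrightarrow> v)"
  by (simp add: D_def inverse_norm_scaleR_eq_sgn)

lemma mem_D_if_sgn_tendsto:
  fixes b :: "nat \<Rightarrow> complex^'n"
  assumes "\<forall>m. b m \<in> A" "b \<longlonglongrightarrow> 0" "(\<lambda>m. sgn (b m)) \<longlonglongrightarrow> v" "norm v = 1"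
  shows "v \<in> D A"
proof -
  have "\<forall>\<^sub>F m in sequentially. sgn (b m) \<noteq> 0"
    using assms(3,4) by (intro tendsto_imp_eventually_ne) auto
  then obtain N where N: "\<And>m. m \<ge> N \<Longrightarrow> b m \<noteq> 0"
    unfolding eventually_sequentially by (auto simp: sgn_zero_iff)
  show ?thesis
    unfolding mem_D_iff
  proof (intro conjI exI[of _ "\<lambda>i. b (i + N)"])
    show "\<forall>i. b (i + N) \<in> A - {0}"
      using N assms(1) by simp
  qed (use assms LIMSEQ_ignore_initial_segment in auto)
qed

definition strongly_approximates :: "(complex^'n) set \<Rightarrow> (complex^'n) set \<Rightarrow> bool" where
  "strongly_approximates A X \<longleftrightarrow> (\<forall>a::nat \<Rightarrow> complex^'n.
      (\<forall>m. a m \<noteq> 0) \<and> a \<longlonglongrightarrow> 0 \<and> (\<exists>l. (\<lambda>m. sgn (a m)) \<longlonglongrightarrow> l \<and> l \<in> X) \<longrightarrow>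
      (\<exists>b. (\<forall>m. b m \<in> A) \<and> much_less (\<lambda>m. a m - b m) a b))"

lemma SSP_iff_strongly_approximates_D: "SSP A \<longleftrightarrow> strongly_approximates A (D A)"
  unfolding SSP_def strongly_approximates_def inverse_norm_scaleR_eq_sgn ..

lemma CSSP_iff_strongly_approximates_LDstar: "CSSP A \<longleftrightarrow> strongly_approximates A (LDstar A)"
  unfolding CSSP_def strongly_approximates_def inverse_norm_scaleR_eq_sgn ..

lemma strongly_approximates_antimono:
  "strongly_approximates A Y \<Longrightarrow> X \<subseteq> Y \<Longrightarrow> strongly_approximates A X"
  unfolding strongly_approximates_def by blast

lemma strongly_approximates_Int_sphere:
  "strongly_approximates A (X \<inter> sphere 0 1) \<longleftrightarrow> strongly_approximates A X"
  unfolding strongly_approximates_def using norm_limit_sgn by (simp add: imp_ex) blast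

lemma strongly_approximates_imp_sphere_subset_D:
  assumes "strongly_approximates A X"
  shows "X \<inter> sphere 0 1 \<subseteq> D A"
proof
  fix v assume v: "v \<in> X \<inter> sphere 0 1"
  define a where "a m = (1 / real (Suc m)) *\<^sub>R v" for m
  have a0: "\<forall>m. a m \<noteq> 0"
    using v by (auto simp: a_def)
  have "(\<lambda>m. (1 / real (Suc m)) *\<^sub>R v) \<longlonglongrightarrow> 0 *\<^sub>R v"
    by (intro tendsto_scaleR tendsto_const LIMSEQ_Suc[OF lim_1_over_n])
  then have a: "a \<longlonglongrightarrow> 0"
    by (simp add: a_def[abs_def])
  have sgn_a: "(\<lambda>m. sgn (a m)) \<longlonglongrightarrow> v"
    using v by (simp add: a_def sgn_scaleR sgn_div_norm)
  obtain b where b: "\<forall>m. b m \<in> A" "much_less (\<lambda>m. a m - b m) a b"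
    using assms a0 a sgn_a v unfolding strongly_approximates_def by blast
  show "v \<in> D A"
    using mem_D_if_sgn_tendsto[OF b(1)] much_less_imp_sgn_tendsto[OF a0 a b(2) sgn_a] v by simp
qed

lemma D_subset_sphere: "D A \<subseteq> sphere 0 1"
  by (auto simp: mem_D_iff)

lemma subset_S1_mult: "X \<subseteq> S1_mult X"
  unfolding S1_mult_def by (auto, metis norm_one vector_smult_lid)

lemma S1_mult_sphere_subset: "X \<subseteq> sphere 0 1 \<Longrightarrow> S1_mult X \<subseteq> sphere 0 1"
  by (auto simp: S1_mult_def norm_vector_smult)

lemma vector_smult_mem_LDstar:
  assumes "u \<in> D A"
  shows "\<theta> *s u \<in> LDstar A"
proof -
  obtain x where x: "\<forall>i. x i \<in> A - {0}" "x \<longlonglongrightarrow> 0" "(\<lambda>i. sgn (x i)) \<longlonglongrightarrow> u"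
    using assms unfolding mem_D_iff by blast
  have "(\<lambda>i. \<theta> *s sgn (x i)) \<longlonglongrightarrow> \<theta> *s u"
    by (intro tendsto_vector_smult tendsto_const x(3))
  then have "(\<lambda>i. (\<theta> * complex_of_real (1 / norm (x i))) *s x i) \<longlonglongrightarrow> \<theta> *s u"
    unfolding inverse_norm_scaleR_eq_sgn[symmetric] scaleR_eq_vector_smult vector_smult_assoc .
  with x(1,2) show ?thesis
    unfolding LDstar_def mem_Collect_eq
    by (intro exI[of _ "\<lambda>i. \<theta> * complex_of_real (1 / norm (x i))"] exI[of _ x] conjI)
qed

lemma LDstar_sphere_subset_S1_mult_D:
  fixes A :: "(complex^'n) set"
  shows "LDstar A \<inter> sphere 0 1 \<subseteq> S1_mult (D A)"
proof
  fix l assume "l \<in> LDstar A \<inter> sphere 0 1"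
  then obtain c w where w: "\<forall>i. w i \<in> A - {0}" "w \<longlonglongrightarrow> 0"
    and cw: "(\<lambda>i. c i *s w i) \<longlonglongrightarrow> l" and nl: "norm l = 1"
    unfolding LDstar_def by auto
  define p where "p i = (sgn (c i), sgn (w i))" for i
  have "seq_compact (cball (0::complex) 1 \<times> sphere (0::complex^'n) 1)"
    by (intro compact_imp_seq_compact compact_Times compact_cball compact_sphere)
  moreover have "\<forall>i. p i \<in> cball 0 1 \<times> sphere 0 1"
    using w(1) by (auto simp: p_def norm_sgn)
  ultimately obtain q r where q: "q \<in> cball 0 1 \<times> sphere 0 1" and r: "strict_mono r"
    and pq: "(p \<circ> r) \<longlonglongrightarrow> q"
    by (rule seq_compactE)
  obtain \<theta> u where q_eq: "q = (\<theta>, u)"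
    by fastforce
  have u: "norm u = 1"
    using q q_eq by simp
  have pr: "(p \<circ> r) \<longlonglongrightarrow> (\<theta>, u)"
    using pq q_eq by simp
  have sgn_w: "(\<lambda>i. sgn (w (r i))) \<longlonglongrightarrow> u"
    using tendsto_snd[OF pr] by (simp add: p_def o_def)
  have "u \<in> D A"
    unfolding mem_D_iff
    using u w LIMSEQ_subseq_LIMSEQ[OF w(2) r] sgn_w by (intro conjI exI[of _ "w \<circ> r"]) auto
  have "(\<lambda>i. sgn (c (r i)) *s sgn (w (r i))) \<longlonglongrightarrow> \<theta> *s u"
    using tendsto_fst[OF pr] sgn_w by (intro tendsto_vector_smult) (simp_all add: p_def o_def)
  moreover have "(\<lambda>i. sgn (c (r i) *s w (r i))) \<longlonglongrightarrow> sgn l"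
    using LIMSEQ_subseq_LIMSEQ[OF cw r] nl by (intro tendsto_sgn) (auto simp: o_def)
  ultimately have "\<theta> *s u = sgn l"
    by (simp add: sgn_vector_smult LIMSEQ_unique)
  then have "l = \<theta> *s u"
    using nl by (simp add: sgn_div_norm)
  moreover have "cmod \<theta> = 1"
    using nl u by (simp add: \<open>l = \<theta> *s u\<close> norm_vector_smult)
  ultimately show "l \<in> S1_mult (D A)"
    unfolding S1_mult_def using \<open>u \<in> D A\<close> by blast
qed

lemma LDstar_Int_sphere: "LDstar A \<inter> sphere 0 1 = S1_mult (D A)"
proof
  show "S1_mult (D A) \<subseteq> LDstar A \<inter> sphere 0 1"
  proof
    fix v assume v: "v \<in> S1_mult (D A)"
    then obtain \<theta> u where "v = \<theta> *s u" "u \<in> D A"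
      unfolding S1_mult_def by blast
    then show "v \<in> LDstar A \<inter> sphere 0 1"
      using v S1_mult_sphere_subset[OF D_subset_sphere] vector_smult_mem_LDstar by blast
  qed
qed (rule LDstar_sphere_subset_S1_mult_D)

lemma CSSP_iff_strongly_approximates_S1_mult_D:
  "CSSP A \<longleftrightarrow> strongly_approximates A (S1_mult (D A))"
  by (metis CSSP_iff_strongly_approximates_LDstar LDstar_Int_sphere strongly_approximates_Int_sphere)

lemma CSSP_iff_SSP_and_S1_mult_D_eq: "CSSP A \<longleftrightarrow> SSP A \<and> S1_mult (D A) = D A"
proof
  assume "CSSP A"
  then have approx: "strongly_approximates A (S1_mult (D A))"
    by (simp add: CSSP_iff_strongly_approximates_S1_mult_D)
  then have "SSP A"
    unfolding SSP_iff_strongly_approximates_D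
    by (rule strongly_approximates_antimono) (rule subset_S1_mult)
  moreover have "S1_mult (D A) \<subseteq> D A"
    using strongly_approximates_imp_sphere_subset_D[OF approx]
      S1_mult_sphere_subset[OF D_subset_sphere] by blast
  ultimately show "SSP A \<and> S1_mult (D A) = D A"
    using subset_S1_mult by blast
qed (simp add: CSSP_iff_strongly_approximates_S1_mult_D SSP_iff_strongly_approximates_D)

lemma LDstar_S1_mult_subset:
  fixes A :: "(complex^'n) set"
  shows "LDstar (S1_mult A) \<subseteq> LDstar A"
proof
  fix v assume "v \<in> LDstar (S1_mult A)"
  then obtain c w where w: "\<forall>i. w i \<in> S1_mult A - {0}" "w \<longlonglongrightarrow> 0"
    and cw: "(\<lambda>i. c i *s w i) \<longlonglongrightarrow> v"
    unfolding LDstar_def by blast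
  have "\<forall>i. \<exists>t y. w i = t *s y \<and> cmod t = 1 \<and> y \<in> A"
    using w(1) unfolding S1_mult_def by blast
  then obtain \<theta> x where \<theta>x: "\<And>i. w i = \<theta> i *s x i \<and> cmod (\<theta> i) = 1 \<and> x i \<in> A"
    by metis
  have "norm (x i) = norm (w i)" for i
    using \<theta>x[of i] by (simp add: norm_vector_smult)
  then have "(\<lambda>i. norm (x i)) \<longlonglongrightarrow> 0"
    using tendsto_norm_zero[OF w(2)] by simp
  then have "x \<longlonglongrightarrow> 0"
    by (rule tendsto_norm_zero_cancel)
  moreover have "\<forall>i. x i \<in> A - {0}"
    using \<theta>x w(1) by (metis DiffE DiffI singleton_iff vector_smult_rzero)
  moreover have "(\<lambda>i. (c i * \<theta> i) *s x i) \<longlonglongrightarrow> v"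
    using cw \<theta>x by (simp add: vector_smult_assoc)
  ultimately show "v \<in> LDstar A"
    unfolding LDstar_def mem_Collect_eq by (intro exI[of _ "\<lambda>i. c i * \<theta> i"] exI[of _ x] conjI)
qed

lemma much_less_vector_smult:
  fixes a b :: "nat \<Rightarrow> complex^'n"
  assumes "cmod \<phi> = 1" "much_less (\<lambda>m. a m - b m) a b"
  shows "much_less (\<lambda>m. \<phi> *s a m - \<phi> *s b m) (\<lambda>m. \<phi> *s a m) (\<lambda>m. \<phi> *s b m)"
  using assms unfolding much_less_def vector_ssub_ldistrib[symmetric] norm_vector_smult by simp

lemma strongly_approximates_S1_mult:
  fixes A X :: "(complex^'n) set"
  assumes "strongly_approximates A X"
  shows "strongly_approximates (S1_mult A) (S1_mult X)"
  unfolding strongly_approximates_def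
proof (intro allI impI)
  fix a :: "nat \<Rightarrow> complex^'n"
  assume "(\<forall>m. a m \<noteq> 0) \<and> a \<longlonglongrightarrow> 0 \<and> (\<exists>l. (\<lambda>m. sgn (a m)) \<longlonglongrightarrow> l \<and> l \<in> S1_mult X)"
  then obtain \<phi> u where a0: "\<forall>m. a m \<noteq> 0" and a: "a \<longlonglongrightarrow> 0"
    and sgn_a: "(\<lambda>m. sgn (a m)) \<longlonglongrightarrow> \<phi> *s u" and \<phi>: "cmod \<phi> = 1" and u: "u \<in> X"
    unfolding S1_mult_def by blast
  have cnj_\<phi>: "cnj \<phi> * \<phi> = 1"
    using complex_norm_square[of \<phi>] \<phi> by (simp add: mult.commute)
  define a' where "a' m = cnj \<phi> *s a m" for m
  have a_eq: "a m = \<phi> *s a' m" for m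
    using cnj_\<phi> by (simp add: a'_def mult.commute)
  have a'0: "\<forall>m. a' m \<noteq> 0"
    using a0 a_eq by (metis vector_smult_rzero)
  have "(\<lambda>m. cnj \<phi> *s a m) \<longlonglongrightarrow> cnj \<phi> *s 0"
    by (intro tendsto_vector_smult tendsto_const a)
  then have a': "a' \<longlonglongrightarrow> 0"
    by (simp add: a'_def[abs_def])
  have "(\<lambda>m. cnj \<phi> *s sgn (a m)) \<longlonglongrightarrow> cnj \<phi> *s (\<phi> *s u)"
    by (intro tendsto_vector_smult tendsto_const sgn_a)
  moreover have "sgn (cnj \<phi>) = cnj \<phi>"
    using \<phi> by (simp add: sgn_div_norm)
  ultimately have sgn_a': "(\<lambda>m. sgn (a' m)) \<longlonglongrightarrow> u"
    using cnj_\<phi> by (simp add: a'_def sgn_vector_smult)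
  obtain b' where b': "\<forall>m. b' m \<in> A" "much_less (\<lambda>m. a' m - b' m) a' b'"
    using assms a'0 a' sgn_a' u unfolding strongly_approximates_def by blast
  have "\<forall>m. \<phi> *s b' m \<in> S1_mult A"
    using b'(1) \<phi> unfolding S1_mult_def by blast
  moreover have "much_less (\<lambda>m. a m - \<phi> *s b' m) a (\<lambda>m. \<phi> *s b' m)"
    using much_less_vector_smult[OF \<phi> b'(2)] by (simp add: a_eq[abs_def])
  ultimately show "\<exists>b. (\<forall>m. b m \<in> S1_mult A) \<and> much_less (\<lambda>m. a m - b m) a b"
    by (intro exI[of _ "\<lambda>m. \<phi> *s b' m"] conjI)
qed

lemma CSSP_S1_mult:
  assumes "SSP A"
  shows "CSSP (S1_mult A)"
proof -
  have "LDstar (S1_mult A) \<inter> sphere 0 1 \<subseteq> S1_mult (D A)"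
    using LDstar_S1_mult_subset LDstar_Int_sphere by blast
  moreover have "strongly_approximates (S1_mult A) (S1_mult (D A))"
    using assms by (simp add: SSP_iff_strongly_approximates_D strongly_approximates_S1_mult)
  ultimately show ?thesis
    by (metis CSSP_iff_strongly_approximates_LDstar strongly_approximates_Int_sphere
        strongly_approximates_antimono)
qed

lemma LDstar_subset_closure:
  fixes K :: "(complex^'n) set"
  assumes cone: "\<And>c x. x \<in> K \<Longrightarrow> c *s x \<in> K"
  shows "LDstar K \<subseteq> closure K"
proof
  fix v assume "v \<in> LDstar K"
  then obtain c w where "\<forall>i. w i \<in> K - {0}" "(\<lambda>i. c i *s w i) \<longlonglongrightarrow> v"
    unfolding LDstar_def by blast
  then show "v \<in> closure K"
    unfolding closure_sequential using cone by (intro exI[of _ "\<lambda>i. c i *s w i"]) auto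
qed

lemma CSSP_complex_cone:
  fixes K :: "(complex^'n) set"
  assumes cone: "\<And>c x. x \<in> K \<Longrightarrow> c *s x \<in> K"
  shows "CSSP K"
  unfolding CSSP_iff_strongly_approximates_LDstar strongly_approximates_def
proof (intro allI impI)
  fix a :: "nat \<Rightarrow> complex^'n"
  assume "(\<forall>m. a m \<noteq> 0) \<and> a \<longlonglongrightarrow> 0 \<and> (\<exists>l. (\<lambda>m. sgn (a m)) \<longlonglongrightarrow> l \<and> l \<in> LDstar K)"
  then obtain l where a0: "\<forall>m. a m \<noteq> 0" and sgn_a: "(\<lambda>m. sgn (a m)) \<longlonglongrightarrow> l"
    and l: "l \<in> closure K"
    using LDstar_subset_closure[OF cone] by blast
  have "norm l = 1"
    using norm_limit_sgn a0 sgn_a by blast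
  obtain y where y: "\<forall>m. y m \<in> K" "y \<longlonglongrightarrow> l"
    using l unfolding closure_sequential by blast
  have "(\<lambda>m. sgn (y m)) \<longlonglongrightarrow> sgn l"
    using y(2) \<open>norm l = 1\<close> by (intro tendsto_sgn) auto
  then have "(\<lambda>m. sgn (a m) - sgn (y m)) \<longlonglongrightarrow> l - l"
    using \<open>norm l = 1\<close> by (intro tendsto_diff sgn_a) (simp add: sgn_div_norm)
  then have e: "(\<lambda>m. norm (sgn (a m) - sgn (y m))) \<longlonglongrightarrow> 0"
    by (simp add: tendsto_norm_zero)
  define b where "b m = norm (a m) *\<^sub>R sgn (y m)" for m
  have "b m \<in> K" for m
    using cone[OF y(1)[rule_format, of m]]
    by (simp add: b_def sgn_div_norm scaleR_eq_vector_smult vector_smult_assoc)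
  moreover have "much_less (\<lambda>m. a m - b m) a b"
    unfolding much_less_def
  proof
    have diff: "norm (a m - b m) = norm (a m) * norm (sgn (a m) - sgn (y m))" for m
    proof -
      have "a m - b m = norm (a m) *\<^sub>R (sgn (a m) - sgn (y m))"
        using a0 by (simp add: b_def sgn_div_norm algebra_simps)
      then show ?thesis
        by simp
    qed
    show "(\<lambda>m. norm (a m - b m) / norm (a m)) \<longlonglongrightarrow> 0"
      using e a0 by (simp add: diff)
    have norm_b: "norm (b m) = (if y m = 0 then 0 else norm (a m))" for m
      by (simp add: b_def norm_sgn)
    \<comment> \<open>If \<open>y m = 0\<close> then \<open>b m = 0\<close>, and the quotient is \<open>0\<close> since \<open>x / 0 = 0\<close>.\<close>
    have "norm (a m - b m) / norm (b m) \<le> norm (sgn (a m) - sgn (y m))" for m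
      using a0 by (simp add: diff norm_b)
    then show "(\<lambda>m. norm (a m - b m) / norm (b m)) \<longlonglongrightarrow> 0"
      by (intro Lim_null_comparison[OF always_eventually e]) simp
  qed
  ultimately show "\<exists>b. (\<forall>m. b m \<in> K) \<and> much_less (\<lambda>m. a m - b m) a b"
    by blast
qed

lemma C_mult_cone:
  assumes "x \<in> C_mult A"
  shows "c *s x \<in> C_mult A"
proof -
  obtain d y where "x = d *s y" "y \<in> A"
    using assms unfolding C_mult_def by blast
  then have "c *s x = (c * d) *s y \<and> y \<in> A"
    by simp
  then show ?thesis
    unfolding C_mult_def by blast
qed

theorem proposition2p41:
  fixes A :: "(complex^'n) set"
  assumes "0 \<in> closure A"
  shows "(CSSP A \<longleftrightarrow> SSP A \<and> S1_mult (D A) = D A) \<and>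
         (SSP A \<longrightarrow> CSSP (S1_mult A) \<and> CSSP (C_mult A))"
proof (intro conjI impI)
  show "CSSP A \<longleftrightarrow> SSP A \<and> S1_mult (D A) = D A"
    by (rule CSSP_iff_SSP_and_S1_mult_D_eq)
  show "CSSP (S1_mult A)" if "SSP A"
    using that by (rule CSSP_S1_mult)
  show "CSSP (C_mult A)"
    by (rule CSSP_complex_cone) (rule C_mult_cone)
qed

end
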